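(* Let $p,q\geq 5$ be two distinct primes. Then there is no $(p+q)\times(p+q)$ circulant complex Hadamard matrix all of whose entries are $pq$-th roots of unity, i.e. $C^{circ}_{p+q}(pq)=\emptyset$.
   Context: A complex Hadamard matrix of order $n$ is a matrix $H\in M_n(\mathbb C)$ with $|H_{ij}|=1$ for all $i,j$ and pairwise orthogonal rows. A matrix $H=(H_{ij})_{i,j=0}^{n-1}$ is circulant if $H_{ij}$ depends only on $j-i$ modulo $n$. $C^{circ}_n(l)$ denotes the set of $n\times n$ circulant complex Hadamard matrices whose entries are all $l$-th roots of unity. *)

theory Defs
  imports Complex_Main "HOL-Computational_Algebra.Primes"
begin

text \<open>Matrices of order n are represented as functions nat => nat => complex,
  indexed by {0..<n}.\<close>

definition complex_hadamard :: "nat \<Rightarrow> (nat \<Rightarrow> nat \<Rightarrow> complex) \<Rightarrow> bool" where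
  "complex_hadamard n H \<longleftrightarrow>
     (\<forall>i<n. \<forall>j<n. cmod (H i j) = 1) \<and>
     (\<forall>i<n. \<forall>k<n. i \<noteq> k \<longrightarrow> (\<Sum>j<n. H i j * cnj (H k j)) = 0)"

definition circulant :: "nat \<Rightarrow> (nat \<Rightarrow> nat \<Rightarrow> complex) \<Rightarrow> bool" where
  "circulant n H \<longleftrightarrow>
     (\<forall>i<n. \<forall>j<n. \<forall>i'<n. \<forall>j'<n.
        (j + n - i) mod n = (j' + n - i') mod n \<longrightarrow> H i j = H i' j')"

definition circ_hadamard_roots :: "nat \<Rightarrow> nat \<Rightarrow> (nat \<Rightarrow> nat \<Rightarrow> complex) set" where
  "circ_hadamard_roots n l = {H. complex_hadamard n H \<and> circulant n H \<and>
      (\<forall>i<n. \<forall>j<n. H i j ^ l = 1)}"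

end

theory Submission
  imports Defs "HOL-Computational_Algebra.Polynomial_Factorial"
begin

(* Let H be a circulant complex Hadamard matrix of order n = p + q whose entries
   are pq-th roots of unity, and write its first row as \<zeta>^(e j) with \<zeta> = cis(2\<pi>/pq).
   Orthogonality of row 0 and row k says that a sum of n pq-th roots of unity,
   \<Sum>j \<zeta>^(d j) with d j = e j - e (j - k), vanishes.

   1. Galois invariance (Dedekind's argument): a vanishing polynomial expression in an
      m-th root of unity \<omega> keeps vanishing at \<omega>^a for every a coprime to m.  This rests on
      the Frobenius congruence G^l \<equiv> G(x^l) mod l in \<int>[x] and on the separability of x^m - 1.
   2. Averaging over all Galois conjugates (a character sum) turns the vanishing sums into an
      identity between the numbers of exponents d j in given residue classes mod pq, p and q.
   3. Elementary counting with n = p + q then forces: every d j is divisible by p or by q,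
      and some d j is not divisible by p, some not by q.
   4. Reading this for all shifts k: any two entries of the first row agree in their exponent
      mod p or mod q, yet neither residue is constant along the row -- which is impossible. *)


section \<open>Congruences modulo a prime\<close>

lemma prime_dvd_binomial_power:
  fixes x y :: "'a::comm_ring_1"
  assumes "prime l"
  shows "(of_nat l :: 'a) dvd ((x + y) ^ l - x ^ l - y ^ l)"
proof -
  have l0: "l > 0" using assms prime_gt_0_nat by blast
  have "(x + y) ^ l = (\<Sum>k\<le>l. of_nat (l choose k) * x ^ k * y ^ (l - k))"
    by (rule binomial_ring)
  also have "{..l} = insert l (insert 0 {1..<l})" using l0 by auto
  also have "(\<Sum>k\<in>insert l (insert 0 {1..<l}). of_nat (l choose k) * x ^ k * y ^ (l - k))
     = x ^ l + (y ^ l + (\<Sum>k\<in>{1..<l}. of_nat (l choose k) * x ^ k * y ^ (l - k)))"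
    using l0 by (subst sum.insert; simp)+
  finally have inner: "(x + y) ^ l - x ^ l - y ^ l
      = (\<Sum>k\<in>{1..<l}. of_nat (l choose k) * x ^ k * y ^ (l - k))"
    by (simp add: algebra_simps)
  have "(of_nat l :: 'a) dvd (\<Sum>k\<in>{1..<l}. of_nat (l choose k) * x ^ k * y ^ (l - k))"
  proof (rule dvd_sum)
    fix k assume "k \<in> {1..<l}"
    hence "l dvd (l choose k)" using assms by (intro dvd_choose_prime) auto
    hence "(of_nat l :: 'a) dvd of_nat (l choose k)" by (metis dvd_def of_nat_mult)
    thus "(of_nat l :: 'a) dvd of_nat (l choose k) * x ^ k * y ^ (l - k)"
      by (simp add: mult.assoc)
  qed
  thus ?thesis using inner by simp
qed

lemma diff_dvd_power_diff:
  fixes x y :: "'a::comm_ring_1"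
  shows "(x - y) dvd (x ^ n - y ^ n)"
proof (induction n)
  case 0 thus ?case by simp
next
  case (Suc n)
  have "x ^ Suc n - y ^ Suc n = x * (x ^ n - y ^ n) + (x - y) * y ^ n"
    by (simp add: algebra_simps)
  thus ?case using Suc by (metis dvd_add dvd_mult dvd_triv_left)
qed

lemma fermat_little_int:
  fixes a :: int
  assumes l: "prime l"
  shows "int l dvd a ^ l - a"
proof -
  have nat_case: "int l dvd int b ^ l - int b" for b
  proof (induction b)
    case 0 thus ?case using l prime_gt_0_nat by (simp add: power_0_left)
  next
    case (Suc b)
    have "int l dvd ((int b + 1) ^ l - int b ^ l - 1 ^ l) + (int b ^ l - int b)"
      using prime_dvd_binomial_power[OF l, of "int b" 1] Suc by (intro dvd_add) auto
    thus ?case by (simp add: algebra_simps)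
  qed
  define r where "r = a mod int l"
  have r0: "r \<ge> 0" using l prime_gt_0_nat by (simp add: r_def)
  have ar: "int l dvd a - r" by (simp add: r_def minus_mod_eq_mult_div)
  hence "int l dvd a ^ l - r ^ l" by (meson dvd_trans diff_dvd_power_diff)
  moreover have "int l dvd r ^ l - r" using nat_case[of "nat r"] r0 by simp
  ultimately have "int l dvd (a ^ l - r ^ l) + (r ^ l - r) - (a - r)"
    using ar by (meson dvd_add dvd_diff)
  thus ?thesis by simp
qed


section \<open>Integer polynomials evaluated at complex numbers\<close>

abbreviation to_cpoly :: "int poly \<Rightarrow> complex poly" where
  "to_cpoly \<equiv> map_poly of_int"

lemma to_cpoly_add: "to_cpoly (f + g) = to_cpoly f + to_cpoly g"
  by (intro poly_eqI) (simp add: coeff_map_poly)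

lemma to_cpoly_diff: "to_cpoly (f - g) = to_cpoly f - to_cpoly g"
  by (intro poly_eqI) (simp add: coeff_map_poly)

lemma to_cpoly_mult: "to_cpoly (f * g) = to_cpoly f * to_cpoly g"
  by (intro poly_eqI) (simp add: coeff_map_poly coeff_mult of_int_sum)

lemma to_cpoly_smult: "to_cpoly (smult c f) = smult (of_int c) (to_cpoly f)"
  by (intro poly_eqI) (simp add: coeff_map_poly)

lemma to_cpoly_monom: "to_cpoly (monom c n) = monom (of_int c) n"
  by (simp add: map_poly_monom)

lemma to_cpoly_const: "to_cpoly [:c:] = [:of_int c:]"
  by (simp add: map_poly_pCons)

lemma to_cpoly_pcompose: "to_cpoly (pcompose f g) = pcompose (to_cpoly f) (to_cpoly g)"
proof (induction f rule: pCons_induct)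
  case 0 thus ?case by simp
next
  case (pCons a f)
  thus ?case by (simp add: pcompose_pCons to_cpoly_add to_cpoly_mult to_cpoly_const map_poly_pCons)
qed

lemma poly_sum_monom:
  "poly (to_cpoly (\<Sum>j<(n::nat). monom 1 (d j))) z = (\<Sum>j<n. z ^ (d j :: nat))"
  by (induction n) (simp_all add: to_cpoly_add to_cpoly_monom poly_monom)

lemma frobenius_int_poly:
  fixes G :: "int poly"
  assumes l: "prime l"
  shows "(of_nat l :: int poly) dvd (G ^ l - pcompose G (monom 1 l))"
proof (induction G rule: pCons_induct)
  case 0
  thus ?case using l prime_gt_0_nat by (simp add: power_0_left)
next
  case (pCons a G)
  let ?L = "(of_nat l :: int poly)" and ?x = "[:0, 1::int:]"
  have "int l dvd a ^ l - a" by (rule fermat_little_int[OF l])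
  then obtain t where "a ^ l - a = int l * t" by (auto elim: dvdE)
  hence "[:a:] ^ l - [:a:] = [:int l:] * [:t:]" by (simp add: poly_const_pow)
  hence const: "?L dvd [:a:] ^ l - [:a:]" by (simp add: of_nat_poly)
  have "(?x * G) ^ l - ?x ^ l * pcompose G (monom 1 l)
      = ?x ^ l * (G ^ l - pcompose G (monom 1 l))"
    by (simp only: power_mult_distrib right_diff_distrib)
  hence shifted: "?L dvd (?x * G) ^ l - ?x ^ l * pcompose G (monom 1 l)"
    using pCons.IH by simp
  have "pCons a G ^ l - pcompose (pCons a G) (monom 1 l) =
     (([:a:] + ?x * G) ^ l - [:a:] ^ l - (?x * G) ^ l) + ([:a:] ^ l - [:a:])
     + ((?x * G) ^ l - ?x ^ l * pcompose G (monom 1 l))"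
    by (simp add: pcompose_pCons monom_altdef algebra_simps)
  also have "?L dvd \<dots>"
    using prime_dvd_binomial_power[OF l] const shifted by (intro dvd_add)
  finally show ?case .
qed

text \<open>We take a primitive polynomial of least degree and use Gauss's lemma.\<close>
lemma int_minimal_polynomial:
  fixes \<alpha> :: complex
  assumes P: "poly (to_cpoly P) \<alpha> = 0" "P \<noteq> 0"
  obtains g where "poly (to_cpoly g) \<alpha> = 0" "degree g \<ge> 1"
    "\<And>f. poly (to_cpoly f) \<alpha> = 0 \<Longrightarrow> g dvd f"
proof -
  let ?S = "{h. h \<noteq> 0 \<and> poly (to_cpoly h) \<alpha> = 0}"
  define d where "d = (LEAST d. \<exists>h\<in>?S. degree h = d)"
  have ex: "\<exists>d. \<exists>h\<in>?S. degree h = d" using P by blast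
  from LeastI_ex[OF ex] obtain h0 where h0: "h0 \<in> ?S" "degree h0 = d"
    unfolding d_def by blast
  have dmin: "d \<le> degree h" if "h \<in> ?S" for h
    unfolding d_def by (rule Least_le) (use that in blast)
  define g where "g = primitive_part h0"
  have c0: "content h0 \<noteq> 0" using h0 by simp
  have "poly (to_cpoly h0) \<alpha> = of_int (content h0) * poly (to_cpoly g) \<alpha>"
    by (subst content_times_primitive_part[symmetric, of h0])
      (simp only: g_def to_cpoly_smult poly_smult)
  hence root: "poly (to_cpoly g) \<alpha> = 0" using h0 c0 by auto
  have primitive: "content g = 1" using h0 by (simp add: g_def)
  hence g0: "g \<noteq> 0" by auto
  have gd: "degree g = d" using h0 by (simp add: g_def)
  have nonconst: "degree g \<ge> 1"
  proof (rule ccontr)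
    assume "\<not> degree g \<ge> 1"
    then obtain c where "g = [:c:]" by (metis degree_eq_zeroE less_one not_le)
    with root g0 show False by (simp add: to_cpoly_const)
  qed
  have minimal: "g dvd f" if f: "poly (to_cpoly f) \<alpha> = 0" for f
  proof -
    obtain s r where sr: "pseudo_divmod f g = (s, r)" by (cases "pseudo_divmod f g") auto
    define c where "c = coeff g (degree g) ^ (Suc (degree f) - degree g)"
    have eq: "smult c f = g * s + r" and rd: "r = 0 \<or> degree r < degree g"
      using pseudo_divmod[OF g0 sr] by (simp_all add: c_def)
    have cnz: "c \<noteq> 0" using g0 by (simp add: c_def)
    have "poly (to_cpoly (smult c f)) \<alpha> = poly (to_cpoly (g * s + r)) \<alpha>" by (simp only: eq)
    hence "poly (to_cpoly r) \<alpha> = 0"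
      using f root by (simp add: to_cpoly_smult to_cpoly_add to_cpoly_mult)
    hence r0: "r = 0" using rd dmin[of r] gd by force
    have "smult (to_fract c) (fract_poly f) = fract_poly g * fract_poly s"
      using arg_cong[OF eq, of fract_poly] r0 by simp
    hence "smult (inverse (to_fract c)) (smult (to_fract c) (fract_poly f))
        = smult (inverse (to_fract c)) (fract_poly g * fract_poly s)" by simp
    hence "fract_poly f = fract_poly g * smult (inverse (to_fract c)) (fract_poly s)"
      using cnz by (simp add: mult_smult_right)
    hence "fract_poly g dvd fract_poly f" by (rule dvdI)
    thus "g dvd f" using primitive by (rule fract_poly_dvdD)
  qed
  show ?thesis using that root nonconst minimal by blast
qed

text \<open>If \<open>g\<close> has a unit leading coefficient and positive degree, then a constant that is
  congruent modulo a prime \<open>l\<close> to a multiple of \<open>g\<close> is divisible by \<open>l\<close>: comparing top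
  coefficients shows that the cofactor vanishes modulo \<open>l\<close>, one term at a time.\<close>
lemma prime_dvd_cofactor:
  fixes g W :: "int poly"
  assumes l: "prime l" and lc: "lead_coeff g dvd 1" and dg: "degree g \<ge> 1"
  shows "[:int l:] dvd ([:c:] - g * W) \<Longrightarrow> [:int l:] dvd W"
proof (induction "degree W" arbitrary: W rule: less_induct)
  case less
  show ?case
  proof (cases "W = 0")
    case True thus ?thesis by simp
  next
    case False
    have "coeff ([:c:] - g * W) (degree g + degree W) = - (lead_coeff g * lead_coeff W)"
      using dg by (simp add: coeff_mult_degree_sum coeff_pCons split: nat.splits)
    moreover have "int l dvd coeff ([:c:] - g * W) (degree g + degree W)"
      using less.prems const_poly_dvd_iff by blast
    ultimately have "int l dvd lead_coeff g * lead_coeff W" by simp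
    moreover obtain u where u: "1 = lead_coeff g * u" using lc unfolding dvd_def by blast
    ultimately have "int l dvd lead_coeff g * lead_coeff W * u" by simp
    hence "int l dvd lead_coeff W" using u by (metis mult.assoc mult.commute mult.right_neutral)
    hence top: "[:int l:] dvd monom (lead_coeff W) (degree W)"
      by (auto simp: const_poly_dvd_iff)
    define W' where "W' = W - monom (lead_coeff W) (degree W)"
    have "[:int l:] dvd W'"
    proof (cases "W' = 0")
      case True thus ?thesis by simp
    next
      case False
      have "degree W' \<le> degree W" unfolding W'_def
        by (intro degree_diff_le) (auto simp: degree_monom_le)
      moreover have "coeff W' (degree W) = 0" by (simp add: W'_def)
      ultimately have lt: "degree W' < degree W" using False
        by (metis le_neq_implies_less leading_coeff_0_iff)
      have "[:c:] - g * W' = ([:c:] - g * W) + g * monom (lead_coeff W) (degree W)"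
        by (simp add: W'_def algebra_simps)
      also have "[:int l:] dvd \<dots>" using less.prems top by (intro dvd_add) auto
      finally show ?thesis using less.hyps[OF lt] by blast
    qed
    moreover have "W = W' + monom (lead_coeff W) (degree W)" by (simp add: W'_def)
    ultimately show ?thesis using top by (metis dvd_add)
  qed
qed

lemma prime_dvd_constant:
  fixes g W :: "int poly"
  assumes l: "prime l" and lc: "lead_coeff g dvd 1" and dg: "degree g \<ge> 1"
    and d: "[:int l:] dvd ([:c:] - g * W)"
  shows "int l dvd c"
proof -
  have "[:int l:] dvd ([:c:] - g * W) + g * W"
    using prime_dvd_cofactor[OF l lc dg d] d by (intro dvd_add) auto
  thus ?thesis by simp
qed


section \<open>Dedekind's lemma on conjugate roots of unity\<close>

definition unity_poly :: "nat \<Rightarrow> int poly" where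
  "unity_poly m = monom 1 m - 1"

lemma poly_unity_poly: "poly (to_cpoly (unity_poly m)) z = z ^ m - 1"
  by (simp add: unity_poly_def to_cpoly_diff to_cpoly_monom poly_monom)

lemma lead_coeff_unity_poly:
  assumes "m > 0"
  shows "lead_coeff (unity_poly m) = 1"
proof -
  have top: "coeff (unity_poly m) m = 1" using assms by (simp add: unity_poly_def coeff_1)
  have "degree (unity_poly m) = m"
  proof (rule antisym)
    show "degree (unity_poly m) \<le> m"
      unfolding unity_poly_def by (intro degree_diff_le) (auto simp: degree_monom_le)
    show "m \<le> degree (unity_poly m)" by (rule le_degree) (simp add: top)
  qed
  thus ?thesis using top by simp
qed

text \<open>Separability of \<open>x^m - 1\<close>: two complementary factors generate an ideal of \<open>\<int>[x]\<close>
  containing the constant \<open>m\<close>, because \<open>x (x^m - 1)' - m (x^m - 1) = m\<close>.\<close>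
lemma unity_poly_factors_comaximal:
  fixes g G k :: "int poly"
  assumes m: "m > 0" and fact: "unity_poly m = g * (G * k)"
  shows "\<exists>A B. [:int m:] = g * A + G * B"
proof -
  have "monom (1::int) 1 * monom (of_nat m) (m - 1) = monom (int m) m"
    using m by (simp add: mult_monom)
  moreover have "[:int m:] * unity_poly m = monom (int m) m - [:int m:]"
    by (simp add: unity_poly_def right_diff_distrib smult_monom)
  ultimately have "[:int m:] = monom 1 1 * pderiv (unity_poly m) - [:int m:] * unity_poly m"
    by (simp add: unity_poly_def pderiv_diff pderiv_monom)
  also have "pderiv (unity_poly m) = g * pderiv (G * k) + (G * k) * pderiv g"
    unfolding fact by (rule pderiv_mult)
  finally have "[:int m:] = g * (monom 1 1 * pderiv (G * k) - [:int m:] * (G * k))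
      + G * (monom 1 1 * pderiv g * k)"
    unfolding fact by algebra
  thus ?thesis by blast
qed

lemma power_in_ideal:
  fixes c g A G B s L E :: "'a::comm_ring_1"
  assumes c: "c = g * A + G * B" and G: "G ^ l = g * s + L * E"
  shows "g dvd c ^ l - L * (E * B ^ l)"
proof -
  have "(g * A + G * B) - G * B dvd (g * A + G * B) ^ l - (G * B) ^ l"
    by (rule diff_dvd_power_diff)
  hence "g dvd c ^ l - (G * B) ^ l" by (simp add: c) (metis dvd_mult_left)
  hence "g dvd (c ^ l - (G * B) ^ l) + g * (s * B ^ l)" by (intro dvd_add) auto
  moreover have "(G * B) ^ l = g * (s * B ^ l) + L * (E * B ^ l)"
    by (simp add: power_mult_distrib G ring_distribs mult_ac)
  ultimately show ?thesis by (simp add: algebra_simps)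
qed

text \<open>Dedekind's lemma: the minimal polynomial \<open>g\<close> of an \<open>m\<close>-th root of unity \<open>\<omega>\<close> also
  vanishes at \<open>\<omega>^l\<close> for every prime \<open>l\<close> not dividing \<open>m\<close>.  Otherwise \<open>x^m - 1 = g G k\<close>
  with \<open>G\<close> the minimal polynomial of \<open>\<omega>^l\<close>; as \<open>g\<close> divides \<open>G(x^l) \<equiv> G^l (mod l)\<close>, the
  relation \<open>m = g A + G B\<close> gives \<open>m^l \<in> (g, l)\<close>, whence \<open>l\<close> divides \<open>m\<close>.\<close>
lemma minimal_polynomial_root_power:
  fixes \<omega> :: complex and g :: "int poly"
  assumes m: "m > 0" and w: "\<omega> ^ m = 1" and l: "prime l" "\<not> l dvd m"
    and g: "poly (to_cpoly g) \<omega> = 0" "degree g \<ge> 1"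
      "\<And>f. poly (to_cpoly f) \<omega> = 0 \<Longrightarrow> g dvd f"
  shows "poly (to_cpoly g) (\<omega> ^ l) = 0"
proof (rule ccontr)
  define \<beta> where "\<beta> = \<omega> ^ l"
  assume g\<beta>: "poly (to_cpoly g) (\<omega> ^ l) \<noteq> 0"
  have \<beta>m: "\<beta> ^ m = 1" by (metis \<beta>_def power_mult mult.commute power_one w)
  have X0: "unity_poly m \<noteq> 0" using lead_coeff_unity_poly[OF m] by auto
  obtain G where G: "poly (to_cpoly G) \<beta> = 0"
    and Gmin: "\<And>f. poly (to_cpoly f) \<beta> = 0 \<Longrightarrow> G dvd f"
    using int_minimal_polynomial[of "unity_poly m" \<beta>] \<beta>m X0 by (auto simp: poly_unity_poly)
  obtain h where h: "unity_poly m = g * h"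
    using g(3)[of "unity_poly m"] w by (auto simp: poly_unity_poly elim: dvdE)
  have "poly (to_cpoly h) \<beta> = 0"
    using arg_cong[OF h, of "\<lambda>f. poly (to_cpoly f) \<beta>"] \<beta>m g\<beta>
    by (simp add: poly_unity_poly to_cpoly_mult \<beta>_def)
  then obtain k where "h = G * k" using Gmin by (auto elim: dvdE)
  hence fact: "unity_poly m = g * (G * k)" using h by simp
  have lcg: "lead_coeff g dvd 1"
    using lead_coeff_unity_poly[OF m] by (metis fact dvd_triv_left lead_coeff_mult)
  obtain A B where AB: "[:int m:] = g * A + G * B"
    using unity_poly_factors_comaximal[OF m fact] by blast
  have "poly (to_cpoly (pcompose G (monom 1 l))) \<omega> = poly (to_cpoly G) \<beta>"
    by (simp add: to_cpoly_pcompose poly_pcompose to_cpoly_monom poly_monom \<beta>_def)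
  then obtain s where s: "pcompose G (monom 1 l) = g * s" using g(3) G by (auto elim: dvdE)
  obtain E where "G ^ l - pcompose G (monom 1 l) = [:int l:] * E"
    using frobenius_int_poly[OF l(1), of G] by (auto simp: of_nat_poly elim: dvdE)
  hence "G ^ l = g * s + [:int l:] * E" using s by (simp add: algebra_simps)
  from power_in_ideal[OF AB this] obtain W
    where "[:int m:] ^ l - [:int l:] * (E * B ^ l) = g * W" by (auto elim: dvdE)
  hence "[:int m ^ l:] - g * W = [:int l:] * (E * B ^ l)" by (simp add: poly_const_pow algebra_simps)
  hence "[:int l:] dvd [:int m ^ l:] - g * W" by (metis dvd_triv_left)
  hence "int l dvd int m ^ l" by (rule prime_dvd_constant[OF l(1) lcg g(2)])
  hence "l dvd m" using l(1) prime_dvd_power by (metis of_nat_dvd_iff of_nat_power)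
  thus False using l(2) by simp
qed

lemma conjugate_root_power:
  fixes \<omega> :: complex and f :: "int poly"
  assumes m: "m > 0" and w: "\<omega> ^ m = 1" and l: "prime l" "\<not> l dvd m"
    and f: "poly (to_cpoly f) \<omega> = 0"
  shows "poly (to_cpoly f) (\<omega> ^ l) = 0"
proof -
  have "poly (to_cpoly (unity_poly m)) \<omega> = 0" "unity_poly m \<noteq> 0"
    using w lead_coeff_unity_poly[OF m] by (auto simp: poly_unity_poly)
  then obtain g where g: "poly (to_cpoly g) \<omega> = 0" "degree g \<ge> 1"
    "\<And>f. poly (to_cpoly f) \<omega> = 0 \<Longrightarrow> g dvd f"
    by (rule int_minimal_polynomial) auto
  obtain h where "f = g * h" using g(3)[OF f] by (auto elim: dvdE)
  thus ?thesis using minimal_polynomial_root_power[OF m w l g] by (simp add: to_cpoly_mult)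
qed

text \<open>Consequently an integer polynomial vanishing at an \<open>m\<close>-th root of unity \<open>\<omega>\<close> vanishes at
  all \<open>\<omega>^a\<close> with \<open>a\<close> coprime to \<open>m\<close>: factor \<open>a\<close> into primes not dividing \<open>m\<close>.\<close>
lemma vanishing_at_coprime_powers:
  fixes \<omega> :: complex and f :: "int poly"
  assumes m: "m > 0" and w: "\<omega> ^ m = 1" and f: "poly (to_cpoly f) \<omega> = 0"
  shows "coprime a m \<Longrightarrow> poly (to_cpoly f) (\<omega> ^ a) = 0"
proof (induction a rule: less_induct)
  case (less a)
  show ?case
  proof (cases "a \<le> 1")
    case True
    have "a = 1 \<or> (a = 0 \<and> m = 1)" using True less.prems by (cases "a = 0") auto
    thus ?thesis using f w by auto
  next
    case False
    then obtain l where l: "prime l" "l dvd a" using prime_factor_nat[of a] by auto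
    then obtain b where ab: "a = l * b" by (auto elim: dvdE)
    have "b < a" using False ab prime_gt_1_nat[OF l(1)] by (cases "b = 0") auto
    have lm: "\<not> l dvd m" using less.prems l by (metis coprime_common_divisor_nat not_prime_1)
    have "(\<omega> ^ b) ^ m = 1" by (metis power_mult mult.commute power_one w)
    moreover have "poly (to_cpoly f) (\<omega> ^ b) = 0" using less.IH[OF \<open>b < a\<close>] less.prems ab by simp
    ultimately have "poly (to_cpoly f) ((\<omega> ^ b) ^ l) = 0"
      by (rule conjugate_root_power[OF m _ l(1) lm])
    thus ?thesis by (simp add: ab power_mult[symmetric] mult.commute)
  qed
qed

lemma vanishing_root_sum_conjugate:
  fixes d :: "nat \<Rightarrow> nat"
  assumes m: "m > 0" and van: "(\<Sum>j<n. cis (2 * pi / real m) ^ d j) = 0" and a: "coprime a m"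
  shows "(\<Sum>j<n. cis (2 * pi / real m) ^ (a * d j)) = 0"
proof -
  let ?\<zeta> = "cis (2 * pi / real m)"
  have "?\<zeta> ^ m = 1" using m by (simp add: DeMoivre)
  moreover have "poly (to_cpoly (\<Sum>j<n. monom 1 (d j))) ?\<zeta> = 0"
    using van by (simp add: poly_sum_monom)
  ultimately have "poly (to_cpoly (\<Sum>j<n. monom 1 (d j))) (?\<zeta> ^ a) = 0"
    using vanishing_at_coprime_powers[OF m] a by blast
  thus ?thesis by (simp add: poly_sum_monom power_mult[symmetric])
qed


section \<open>Roots of unity and a character sum\<close>

lemma sum_powers_root_unity:
  fixes w :: complex
  assumes "w ^ k = 1" "k > 0"
  shows "(\<Sum>b<k. w ^ b) = (if w = 1 then of_nat k else 0)"
  using assms by (simp add: geometric_sum)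

lemma cis_power_eq_1_iff:
  assumes m: "m > 0"
  shows "cis (2 * pi / real m) ^ r = 1 \<longleftrightarrow> m dvd r"
proof
  assume "cis (2 * pi / real m) ^ r = 1"
  hence "cos (2 * pi * real r / real m) = 1" by (simp add: DeMoivre mult.commute complex_eq_iff)
  then obtain i :: int where "2 * pi * real r / real m = real_of_int i * 2 * pi"
    by (subst (asm) cos_one_2pi_int) blast
  hence "real r = real_of_int i * real m" using m by (simp add: field_simps)
  hence "int r = i * int m" by (metis of_int_eq_iff of_int_mult of_int_of_nat_eq)
  thus "m dvd r" by (metis dvd_triv_right int_dvd_int_iff)
next
  assume "m dvd r"
  then obtain k where "r = m * k" by (auto elim: dvdE)
  have "cis (2 * pi / real m) ^ m = 1" using m by (simp add: DeMoivre)
  thus "cis (2 * pi / real m) ^ r = 1" by (simp add: \<open>r = m * k\<close> power_mult)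
qed

lemma root_unity_cis_power:
  fixes z :: complex
  assumes m: "m > 0" and z: "z ^ m = 1"
  shows "\<exists>k<m. z = cis (2 * pi / real m) ^ k"
proof -
  have "z \<in> (\<lambda>k. cis (2 * pi * real k / real m)) ` {..<m}"
    using bij_betw_roots_unity[OF m] z unfolding bij_betw_def by auto
  then obtain k where "k < m" "z = cis (2 * pi * real k / real m)" by auto
  moreover have "cis (2 * pi * real k / real m) = cis (2 * pi / real m) ^ k"
    by (simp add: DeMoivre mult.commute)
  ultimately show ?thesis by auto
qed

text \<open>Exponents are handled as natural numbers; \<open>x - z\<close> modulo \<open>m\<close> is written \<open>x + (m - z)\<close>.\<close>
lemma dvd_add_complement_iff:
  fixes x z k m :: nat
  assumes "k dvd m" "z \<le> m"
  shows "k dvd (x + (m - z)) \<longleftrightarrow> x mod k = z mod k"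
proof -
  have "k dvd (x + (m - z)) \<longleftrightarrow> int k dvd (int x - int z) + int m"
    using assms(2) by (simp add: of_nat_diff algebra_simps flip: int_dvd_int_iff)
  also have "\<dots> \<longleftrightarrow> int k dvd int x - int z"
    using assms(1) by (simp add: dvd_add_left_iff)
  also have "\<dots> \<longleftrightarrow> int x mod int k = int z mod int k" by (simp add: mod_eq_dvd_iff)
  also have "\<dots> \<longleftrightarrow> x mod k = z mod k" by (metis of_nat_eq_iff of_nat_mod)
  finally show ?thesis .
qed

definition residue_count :: "(nat \<Rightarrow> nat) \<Rightarrow> nat \<Rightarrow> nat \<Rightarrow> nat \<Rightarrow> nat" where
  "residue_count d n r s = card {j\<in>{..<n}. d j mod r = s}"

text \<open>Orthogonality of characters of \<open>\<int>/k'\<close>, seen inside \<open>\<int>/kk'\<close>: averaging the twisted sums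
  over the multiples of \<open>k\<close> counts the exponents in a residue class modulo \<open>k'\<close>.\<close>
lemma character_sum_count:
  fixes k k' n z :: nat and d :: "nat \<Rightarrow> nat"
  assumes k: "k > 0" "k' > 0" and z: "z < k * k'"
  defines "\<zeta> \<equiv> cis (2 * pi / real (k * k'))"
  shows "(\<Sum>b<k'. (\<Sum>j<n. \<zeta> ^ ((k * b) * d j)) * \<zeta> ^ ((k * b) * (k * k' - z)))
       = of_nat k' * of_nat (residue_count d n k' (z mod k'))"
proof -
  define m where "m = k * k'"
  have m: "m > 0" using k by (simp add: m_def)
  have "(\<Sum>b<k'. (\<Sum>j<n. \<zeta> ^ ((k * b) * d j)) * \<zeta> ^ ((k * b) * (m - z)))
      = (\<Sum>b<k'. \<Sum>j<n. (\<zeta> ^ (k * (d j + (m - z)))) ^ b)"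
  proof (intro sum.cong refl)
    fix b
    have "(\<Sum>j<n. \<zeta> ^ ((k * b) * d j)) * \<zeta> ^ ((k * b) * (m - z))
        = (\<Sum>j<n. \<zeta> ^ ((k * b) * d j + (k * b) * (m - z)))"
      by (simp add: sum_distrib_right power_add)
    also have "\<dots> = (\<Sum>j<n. (\<zeta> ^ (k * (d j + (m - z)))) ^ b)"
      by (simp add: power_mult[symmetric] algebra_simps)
    finally show "(\<Sum>j<n. \<zeta> ^ ((k * b) * d j)) * \<zeta> ^ ((k * b) * (m - z))
        = (\<Sum>j<n. (\<zeta> ^ (k * (d j + (m - z)))) ^ b)" .
  qed
  also have "\<dots> = (\<Sum>j<n. \<Sum>b<k'. (\<zeta> ^ (k * (d j + (m - z)))) ^ b)"
    by (rule sum.swap)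
  also have "\<dots> = (\<Sum>j<n. if d j mod k' = z mod k' then of_nat k' else 0)"
  proof (intro sum.cong refl)
    fix j
    define x where "x = d j + (m - z)"
    have \<zeta>m: "\<zeta> = cis (2 * pi / real m)" by (simp add: \<zeta>_def m_def)
    have "(\<zeta> ^ (k * x)) ^ k' = 1"
      unfolding \<zeta>m power_mult[symmetric] using m by (subst cis_power_eq_1_iff) (auto simp: m_def)
    moreover have "\<zeta> ^ (k * x) = 1 \<longleftrightarrow> d j mod k' = z mod k'"
    proof -
      have "\<zeta> ^ (k * x) = 1 \<longleftrightarrow> k' dvd x"
        unfolding \<zeta>m by (subst cis_power_eq_1_iff[OF m]) (use k in \<open>simp add: m_def\<close>)
      also have "\<dots> \<longleftrightarrow> d j mod k' = z mod k'" unfolding x_def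
        by (rule dvd_add_complement_iff) (use z in \<open>auto simp: m_def\<close>)
      finally show ?thesis .
    qed
    ultimately show "(\<Sum>b<k'. (\<zeta> ^ (k * (d j + (m - z)))) ^ b)
        = (if d j mod k' = z mod k' then of_nat k' else 0)"
      using sum_powers_root_unity[of _ k'] k(2) by (simp add: x_def)
  qed
  also have "\<dots> = of_nat k' * of_nat (residue_count d n k' (z mod k'))"
    by (simp add: residue_count_def sum.inter_filter[symmetric])
  finally show ?thesis by (simp add: m_def)
qed

lemma sum_multiples_reindex:
  fixes h :: "nat \<Rightarrow> complex"
  assumes p: "p > 0"
  shows "(\<Sum>a<p*q. if p dvd a then h a else 0) = (\<Sum>b<q. h (p * b))"
proof -
  have "(\<Sum>a<p*q. if p dvd a then h a else 0) = sum h {a\<in>{..<p*q}. p dvd a}"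
    by (rule sum.inter_filter[symmetric]) simp
  also have "{a\<in>{..<p*q}. p dvd a} = (\<lambda>b. p * b) ` {..<q}"
  proof safe
    fix a assume "a < p * q" "p dvd a"
    then obtain b where "a = p * b" by (auto elim: dvdE)
    with \<open>a < p * q\<close> p show "a \<in> (\<lambda>b. p * b) ` {..<q}" by auto
  qed (use p in auto)
  also have "sum h ((\<lambda>b. p * b) ` {..<q}) = (\<Sum>b<q. h (p * b))"
    using p by (subst sum.reindex) (auto simp: inj_on_def)
  finally show ?thesis .
qed

text \<open>For \<open>m = pq\<close>, an index \<open>a < m\<close> is either coprime to \<open>m\<close>, a nonzero multiple of exactly one
  of \<open>p\<close>, \<open>q\<close>, or zero.  Summing the twisted sums over all \<open>a\<close> and using that they vanish for \<open>a\<close>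
  coprime to \<open>m\<close> (Galois invariance) yields an identity between residue counts modulo \<open>pq\<close>, \<open>p\<close> and \<open>q\<close>.\<close>
lemma residue_count_identity:
  fixes p q n z :: nat and d :: "nat \<Rightarrow> nat"
  assumes pq: "prime p" "prime q" "p \<noteq> q"
    and van: "(\<Sum>j<n. cis (2*pi/real(p*q)) ^ d j) = 0"
    and z: "z < p*q"
  shows "p*q * residue_count d n (p*q) z + n
       = q * residue_count d n q (z mod q) + p * residue_count d n p (z mod p)"
proof -
  define m where "m = p * q"
  define \<zeta> where "\<zeta> = cis (2*pi/real(p*q))"
  define g where "g a = (\<Sum>j<n. \<zeta> ^ (a * d j)) * \<zeta> ^ (a * (m - z))" for a
  have p0: "p > 0" and q0: "q > 0" using pq prime_gt_0_nat by auto
  have m0: "m > 0" using p0 q0 by (simp add: m_def)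
  have whole: "(\<Sum>a<m. g a) = of_nat m * of_nat (residue_count d n m z)"
    using character_sum_count[where k=1 and k'=m and z=z and n=n and d=d] m0 z
    by (simp add: g_def \<zeta>_def m_def)
  have by_p: "(\<Sum>b<q. g (p * b)) = of_nat q * of_nat (residue_count d n q (z mod q))"
    using character_sum_count[where k=p and k'=q and z=z and n=n and d=d] p0 q0 z
    by (simp add: g_def \<zeta>_def m_def)
  have by_q: "(\<Sum>b<p. g (q * b)) = of_nat p * of_nat (residue_count d n p (z mod p))"
    using character_sum_count[where k=q and k'=p and z=z and n=n and d=d] p0 q0 z
    by (simp add: g_def \<zeta>_def m_def mult.commute)
  have split: "g a = (if p dvd a then g a else 0) + (if q dvd a then g a else 0)
      - (if a = 0 then g a else 0)" if a: "a < m" for a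
  proof (cases "p dvd a \<or> q dvd a")
    case False
    have "coprime a p" using False pq(1) by (metis prime_imp_coprime coprime_commute)
    moreover have "coprime a q" using False pq(2) by (metis prime_imp_coprime coprime_commute)
    ultimately have "coprime a (p*q)" by simp
    hence "(\<Sum>j<n. \<zeta> ^ (a * d j)) = 0"
      using vanishing_root_sum_conjugate[where m = "p*q" and n = n and d = d and a = a] van p0 q0 by (simp add: \<zeta>_def)
    thus ?thesis using False by (auto simp: g_def)
  next
    case True
    have "p * q dvd a" if "p dvd a" "q dvd a"
      using that pq by (simp add: primes_coprime divides_mult)
    moreover have "\<not> p * q dvd a" if "a \<noteq> 0" using a that nat_dvd_not_less by (simp add: m_def)
    ultimately have "p dvd a \<and> q dvd a \<longleftrightarrow> a = 0" by auto
    thus ?thesis using True by auto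
  qed
  have "(\<Sum>a<m. g a) = (\<Sum>a<m. if p dvd a then g a else 0) + (\<Sum>a<m. if q dvd a then g a else 0)
      - (\<Sum>a<m. if a = 0 then g a else 0)"
    unfolding sum.distrib[symmetric] sum_subtractf[symmetric] using split by (intro sum.cong) auto
  also have "\<dots> = (\<Sum>b<q. g (p * b)) + (\<Sum>b<p. g (q * b)) - g 0"
    using sum_multiples_reindex[OF p0, of g q] sum_multiples_reindex[OF q0, of g p] m0
    by (simp add: m_def mult.commute)
  finally have "of_nat m * of_nat (residue_count d n m z) = of_nat q * of_nat (residue_count d n q (z mod q))
      + of_nat p * of_nat (residue_count d n p (z mod p)) - (of_nat n :: complex)"
    using whole by_p by_q by (simp add: g_def)
  hence "(of_nat (m * residue_count d n m z + n) :: complex)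
      = of_nat (q * residue_count d n q (z mod q) + p * residue_count d n p (z mod p))"
    by (simp add: algebra_simps)
  thus ?thesis unfolding m_def of_nat_eq_iff .
qed


section \<open>Counting residues\<close>

lemma card_filter_sum:
  "card {j\<in>{..<n::nat}. P j} = (\<Sum>j<n. if P j then 1 else (0::nat))"
  by (simp add: sum.inter_filter[symmetric])

lemma sum_residue_count:
  assumes r: "r > 0"
  shows "(\<Sum>s<r. residue_count d n r s) = n"
proof -
  have "(\<Sum>s<r. residue_count d n r s) = (\<Sum>j<n. \<Sum>s<r. if d j mod r = s then 1 else (0::nat))"
    unfolding residue_count_def card_filter_sum by (rule sum.swap)
  also have "\<dots> = n" using r by (simp add: sum.delta)
  finally show ?thesis .
qed

lemma sum_residues:
  assumes r: "r > 0"
  shows "(\<Sum>j<n. d j mod r) = (\<Sum>s<r. s * residue_count d n r s)"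
proof -
  have "(\<Sum>s<r. s * residue_count d n r s) = (\<Sum>s<r. \<Sum>j<n. if d j mod r = s then s else (0::nat))"
    unfolding residue_count_def card_filter_sum by (simp add: sum_distrib_left) (auto intro!: sum.cong)
  also have "\<dots> = (\<Sum>j<n. \<Sum>s<r. if d j mod r = s then s else (0::nat))" by (rule sum.swap)
  also have "\<dots> = (\<Sum>j<n. d j mod r)" using r by (simp add: sum.delta)
  finally show ?thesis by simp
qed

lemma sum_eq_1_unique:
  fixes K :: "nat \<Rightarrow> nat"
  assumes "finite A" "sum K A = 1"
  obtains s0 where "s0 \<in> A" "K s0 = 1" "\<And>s. s \<in> A \<Longrightarrow> s \<noteq> s0 \<Longrightarrow> K s = 0"
proof -
  from assms obtain s0 where s0: "s0 \<in> A" "K s0 \<noteq> 0"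
    by (metis one_neq_zero sum.neutral)
  have "sum K A = K s0 + sum K (A - {s0})" using assms(1) s0(1) by (simp add: sum.remove)
  hence "K s0 = 1" "sum K (A - {s0}) = 0" using assms(2) s0(2) by linarith+
  thus ?thesis using that assms(1) s0(1) by simp
qed

lemma residue_counts_forced:
  fixes r u n :: nat and d :: "nat \<Rightarrow> nat"
  assumes r: "prime r" "odd r" and u: "prime u" "r \<noteq> u" and n: "n = r + u"
    and cong: "\<And>s. s < r \<Longrightarrow> residue_count d n r s mod u = 1"
    and sdvd: "r dvd (\<Sum>j<n. d j)"
    and s: "s < r"
  shows "residue_count d n r s = (if s = 0 then u + 1 else 1)"
proof -
  let ?C = "residue_count d n r"
  have r0: "r > 0" and u1: "u > 1" using prime_gt_1_nat[OF r(1)] prime_gt_1_nat[OF u(1)] by auto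
  define K where "K s = ?C s div u" for s
  have CK: "?C s = u * K s + 1" if "s < r" for s
    using cong[OF that] by (metis K_def div_mult_mod_eq mult.commute)
  have "n = (\<Sum>s<r. ?C s)" using sum_residue_count[OF r0] by simp
  also have "\<dots> = (\<Sum>s<r. u * K s + 1)" by (intro sum.cong refl) (simp add: CK)
  also have "\<dots> = u * (\<Sum>s<r. K s) + r" unfolding sum.distrib sum_distrib_left by simp
  finally have "(\<Sum>s<r. K s) = 1" using n u1 by simp
  then obtain s0 where s0: "s0 < r" "K s0 = 1" "\<And>s. s < r \<Longrightarrow> s \<noteq> s0 \<Longrightarrow> K s = 0"
    using sum_eq_1_unique[of "{..<r}" K] by auto
  have Cs: "?C s = (if s = s0 then u + 1 else 1)" if "s < r" for s
    using CK[OF that] s0 that by auto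
  obtain t where t: "r = 2 * t + 1" using r(2) oddE by blast
  have "(\<Sum>j<n. d j mod r) = (\<Sum>s<r. s + (if s = s0 then u * s else 0))"
    unfolding sum_residues[OF r0] by (intro sum.cong refl) (simp add: Cs algebra_simps)
  also have "\<dots> = (\<Sum>s<r. s) + u * s0" using s0(1) by (simp add: sum.distrib)
  also have "(\<Sum>s<r. s) = r * t" using Sum_Ico_nat[of 0 r] t by (simp add: lessThan_atLeast0)
  finally have "r dvd r * t + u * s0"
    using sdvd by (metis mod_sum_eq dvd_eq_mod_eq_0)
  hence "r dvd u * s0" by (simp add: dvd_add_right_iff)
  hence "r dvd s0" using r u by (simp add: primes_coprime coprime_dvd_mult_right_iff)
  hence "s0 = 0" using s0(1) by (auto dest: dvd_imp_le)
  thus ?thesis using Cs[OF s] by simp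
qed

text \<open>The congruence \<open>q C \<equiv> q (mod p)\<close> with \<open>p, q\<close> distinct primes gives \<open>C \<equiv> 1 (mod p)\<close>;
  this is how the residue count identity is read modulo \<open>p\<close>.\<close>
lemma coprime_cancel_mod:
  fixes p q C X Y :: nat
  assumes "prime p" "prime q" "p \<noteq> q" and e: "q * C + p * X = p * Y + p + q"
  shows "C mod p = 1"
proof -
  have "int q * (int C - 1) = int p * (int Y + 1 - int X)"
    using arg_cong[OF e, of int] by (simp add: algebra_simps)
  hence "int p dvd int q * (int C - 1)" by (metis dvd_triv_left)
  moreover have "coprime (int p) (int q)" using assms by (simp add: primes_coprime)
  ultimately have "int p dvd int C - 1" by (metis coprime_dvd_mult_right_iff mult.commute)
  hence "int C mod int p = 1 mod int p" by (simp add: mod_eq_dvd_iff)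
  thus ?thesis using prime_gt_1_nat[OF assms(1)] by (metis of_nat_1 of_nat_eq_iff of_nat_mod mod_less)
qed

lemma residue_counts_pq:
  fixes p q n :: nat and d :: "nat \<Rightarrow> nat"
  assumes pq: "prime p" "prime q" "p \<noteq> q" "odd p" "odd q" and n: "n = p + q"
    and van: "(\<Sum>j<n. cis (2*pi/real(p*q)) ^ d j) = 0"
    and sdvd: "(p*q) dvd (\<Sum>j<n. d j)"
  shows "\<And>s. s < p \<Longrightarrow> residue_count d n p s = (if s = 0 then q + 1 else 1)"
    and "\<And>s. s < q \<Longrightarrow> residue_count d n q s = (if s = 0 then p + 1 else 1)"
proof -
  have p1: "p > 1" and q1: "q > 1" using pq prime_gt_1_nat by auto
  note ident = residue_count_identity[OF pq(1-3) van]
  have congp: "residue_count d n p s mod q = 1" if s: "s < p" for s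
  proof (rule coprime_cancel_mod[OF pq(2) pq(1) pq(3)[symmetric]])
    have "p \<le> p * q" using q1 by simp
    hence "s < p * q" using s by linarith
    from ident[OF this] s n show "p * residue_count d n p s + q * residue_count d n q (s mod q)
        = q * (p * residue_count d n (p * q) s) + q + p"
      by (simp add: algebra_simps)
  qed
  have congq: "residue_count d n q s mod p = 1" if s: "s < q" for s
  proof (rule coprime_cancel_mod[OF pq(1-3)])
    have "q \<le> p * q" using p1 by simp
    hence "s < p * q" using s by linarith
    from ident[OF this] s n show "q * residue_count d n q s + p * residue_count d n p (s mod p)
        = p * (q * residue_count d n (p * q) s) + p + q"
      by (simp add: algebra_simps)
  qed
  have "p dvd (\<Sum>j<n. d j)" using sdvd by (rule dvd_mult_left)
  thus "\<And>s. s < p \<Longrightarrow> residue_count d n p s = (if s = 0 then q + 1 else 1)"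
    using residue_counts_forced[OF pq(1) pq(4) pq(2) pq(3) n congp] by blast
  have "q dvd (\<Sum>j<n. d j)" using sdvd by (rule dvd_mult_right)
  moreover have "n = q + p" using n by simp
  ultimately show "\<And>s. s < q \<Longrightarrow> residue_count d n q s = (if s = 0 then p + 1 else 1)"
    using residue_counts_forced[OF pq(2) pq(5) pq(1) pq(3)[symmetric] _ congq] by blast
qed

text \<open>The key structural consequence: every exponent is divisible by \<open>p\<close> or by \<open>q\<close> (a class
  \<open>z\<close> that is nonzero modulo both would have negative count), and since the classes \<open>1\<close>
  modulo \<open>p\<close> and modulo \<open>q\<close> are nonempty, not all exponents are divisible by \<open>p\<close>, nor by \<open>q\<close>.\<close>
lemma vanishing_sum_pq_structure:
  fixes p q n :: nat and d :: "nat \<Rightarrow> nat"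
  assumes pq: "prime p" "prime q" "p \<noteq> q" "odd p" "odd q" and n: "n = p + q"
    and van: "(\<Sum>j<n. cis (2*pi/real(p*q)) ^ d j) = 0"
    and sdvd: "(p*q) dvd (\<Sum>j<n. d j)"
  shows "\<forall>j<n. p dvd d j \<or> q dvd d j" "\<exists>j<n. \<not> p dvd d j" "\<exists>j<n. \<not> q dvd d j"
proof -
  have p1: "p > 1" and q1: "q > 1" using pq prime_gt_1_nat by auto
  note Cp = residue_counts_pq(1)[OF pq n van sdvd]
  note Cq = residue_counts_pq(2)[OF pq n van sdvd]
  show "\<forall>j<n. p dvd d j \<or> q dvd d j"
  proof (intro allI impI, rule ccontr)
    fix j assume j: "j < n" and nd: "\<not> (p dvd d j \<or> q dvd d j)"
    define z where "z = d j mod (p * q)"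
    have "z mod p = d j mod p" "z mod q = d j mod q" by (simp_all add: z_def mod_mod_cancel)
    hence "residue_count d n p (z mod p) = 1" "residue_count d n q (z mod q) = 1"
      using Cp Cq p1 q1 nd by (auto simp: dvd_eq_mod_eq_0)
    with residue_count_identity[OF pq(1-3) van, of z] n p1 q1
    have "residue_count d n (p * q) z = 0" by (simp add: z_def)
    moreover have "j \<in> {j\<in>{..<n}. d j mod (p*q) = z}" using j by (simp add: z_def)
    ultimately show False unfolding residue_count_def by (auto simp: card_eq_0_iff)
  qed
  have "residue_count d n p 1 \<noteq> 0" "residue_count d n q 1 \<noteq> 0" using Cp Cq p1 q1 by auto
  hence "{j\<in>{..<n}. d j mod p = 1} \<noteq> {}" "{j\<in>{..<n}. d j mod q = 1} \<noteq> {}"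
    unfolding residue_count_def by (metis card.empty)+
  then obtain j j' where "j < n" "d j mod p = 1" "j' < n" "d j' mod q = 1" by blast
  thus "\<exists>j<n. \<not> p dvd d j" "\<exists>j<n. \<not> q dvd d j" using p1 q1 by (auto simp: dvd_eq_mod_eq_0)
qed



section \<open>Circulant Hadamard matrices\<close>

lemma circulant_entry:
  assumes "circulant n H" "i < n" "j < n"
  shows "H i j = H 0 ((j + n - i) mod n)"
proof -
  have "0 < n" "(j + n - i) mod n < n" using assms by auto
  moreover have "(j + n - i) mod n = ((j + n - i) mod n + n - 0) mod n" by simp
  ultimately show ?thesis using assms unfolding circulant_def by blast
qed

text \<open>Any two distinct indices are related by a nonzero cyclic shift; hence a reflexive relation
  between every index and each of its cyclic shifts holds between any two indices.\<close>
lemma relation_from_all_shifts: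
  fixes n :: nat
  assumes refl: "\<And>j. R j j"
    and shifts: "\<And>k j. 0 < k \<Longrightarrow> k < n \<Longrightarrow> j < n \<Longrightarrow> R j ((j + n - k) mod n)"
  shows "\<forall>j\<in>{..<n}. \<forall>j'\<in>{..<n}. R j j'"
proof (intro ballI)
  fix j j' assume j: "j \<in> {..<n}" and j': "j' \<in> {..<n}"
  show "R j j'"
  proof (cases "j' < j")
    case True
    hence "(j + n - (j - j')) mod n = j'" "j - j' < n" using j j' by simp_all
    thus ?thesis using shifts[of "j - j'" j] True j by simp
  next
    case False
    show ?thesis
    proof (cases "j = j'")
      case False
      hence "j < j'" using \<open>\<not> j' < j\<close> by simp
      hence "(j + n - (j + n - j')) mod n = j'" "j + n - j' < n" using j' by simp_all
      thus ?thesis using shifts[of "j + n - j'" j] j j' by simp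
    qed (simp add: refl)
  qed
qed

lemma shift_bij:
  fixes n k :: nat
  assumes "k < n"
  shows "bij_betw (\<lambda>j. (j + n - k) mod n) {..<n} {..<n}"
proof (rule bij_betw_byWitness[where f' = "\<lambda>j. (j + k) mod n"])
  show "\<forall>x\<in>{..<n}. ((x + n - k) mod n + k) mod n = x"
    using assms by (simp add: mod_add_left_eq)
  show "\<forall>y\<in>{..<n}. ((y + k) mod n + n - k) mod n = y"
  proof
    fix y assume y: "y \<in> {..<n}"
    have "((y + k) mod n + n - k) mod n = ((y + k) mod n + (n - k)) mod n" using assms by simp
    also have "\<dots> = (y + k + (n - k)) mod n" by (simp add: mod_add_left_eq)
    also have "\<dots> = y" using assms y by simp
    finally show "((y + k) mod n + n - k) mod n = y" .
  qed
qed (use assms in auto)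

lemma cnj_cis_power:
  assumes "m > 0" "x \<le> m"
  shows "cnj (cis (2 * pi / real m) ^ x) = cis (2 * pi / real m) ^ (m - x)"
proof -
  let ?z = "cis (2 * pi / real m) ^ x"
  have "norm ?z = 1" by (simp add: norm_power)
  hence "cnj ?z * ?z = 1" by (metis complex_norm_square mult.commute of_real_1 power_one)
  moreover have "cis (2 * pi / real m) ^ (m - x) * ?z = 1"
    using assms cis_power_eq_1_iff[of m m] by (simp flip: power_add)
  moreover have "?z \<noteq> 0" by simp
  ultimately show ?thesis by (metis mult_right_cancel)
qed

lemma first_row_exponents:
  assumes m: "m > 0" and roots: "\<And>j. j < n \<Longrightarrow> H 0 j ^ m = 1"
  obtains e where "\<And>j. j < n \<Longrightarrow> e j < m \<and> H 0 j = cis (2 * pi / real m) ^ e j"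
proof -
  have "\<forall>j\<in>{..<n}. \<exists>k. k < m \<and> H 0 j = cis (2 * pi / real m) ^ k"
    using root_unity_cis_power[OF m] roots by blast
  then obtain e where "\<forall>j\<in>{..<n}. e j < m \<and> H 0 j = cis (2 * pi / real m) ^ e j"
    by (metis bchoice)
  thus ?thesis using that by blast
qed

lemma circulant_orthogonality:
  assumes hd: "complex_hadamard n H" and circ: "circulant n H" and m: "m > 0"
    and e: "\<And>j. j < n \<Longrightarrow> e j < m \<and> H 0 j = cis (2 * pi / real m) ^ e j"
    and k: "0 < k" "k < n"
  shows "(\<Sum>j<n. cis (2 * pi / real m) ^ (e j + (m - e ((j + n - k) mod n)))) = 0"
proof -
  let ?\<zeta> = "cis (2 * pi / real m)"
  have "(\<Sum>j<n. H 0 j * cnj (H k j)) = 0" using hd k unfolding complex_hadamard_def by auto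
  also have "(\<Sum>j<n. H 0 j * cnj (H k j)) = (\<Sum>j<n. ?\<zeta> ^ (e j + (m - e ((j + n - k) mod n))))"
  proof (intro sum.cong refl)
    fix j assume "j \<in> {..<n}"
    hence j: "j < n" by simp
    have jk: "(j + n - k) mod n < n" using k by simp
    have "cnj (H k j) = ?\<zeta> ^ (m - e ((j + n - k) mod n))"
      using circulant_entry[OF circ k(2) j] e[OF jk] cnj_cis_power[OF m] by (simp add: less_imp_le)
    thus "H 0 j * cnj (H k j) = ?\<zeta> ^ (e j + (m - e ((j + n - k) mod n)))"
      using e[OF j] by (simp add: power_add)
  qed
  finally show ?thesis .
qed

lemma shifted_exponent_sum:
  fixes e :: "nat \<Rightarrow> nat" and n m k :: nat
  assumes e: "\<And>j. j < n \<Longrightarrow> e j \<le> m" and k: "k < n"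
  shows "(\<Sum>j<n. e j + (m - e ((j + n - k) mod n))) = n * m"
proof -
  have "(\<Sum>j<n. e j + (m - e ((j + n - k) mod n))) = (\<Sum>j<n. e j) + (\<Sum>j<n. m - e j)"
    using sum.reindex_bij_betw[OF shift_bij[OF k], of "\<lambda>j. m - e j"] by (simp add: sum.distrib)
  also have "\<dots> = (\<Sum>j<n. m)" using e by (simp add: sum.distrib[symmetric])
  finally show ?thesis by simp
qed

lemma circulant_shift_residues:
  fixes p q n k :: nat and e :: "nat \<Rightarrow> nat"
  assumes pq: "prime p" "prime q" "p \<noteq> q" "odd p" "odd q" and n: "n = p + q"
    and H: "complex_hadamard n H" "circulant n H"
    and row: "\<And>j. j < n \<Longrightarrow> e j < p * q \<and> H 0 j = cis (2 * pi / real (p * q)) ^ e j"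
    and k: "0 < k" "k < n"
  shows "\<forall>j<n. e j mod p = e ((j + n - k) mod n) mod p \<or> e j mod q = e ((j + n - k) mod n) mod q"
    and "\<exists>j<n. e j mod p \<noteq> e ((j + n - k) mod n) mod p"
    and "\<exists>j<n. e j mod q \<noteq> e ((j + n - k) mod n) mod q"
proof -
  have e: "\<And>j. j < n \<Longrightarrow> e j < p * q" using row by blast
  have "p * q > 0" using pq prime_gt_0_nat by simp
  note van = circulant_orthogonality[OF H this row k]
  define d where "d j = e j + (p * q - e ((j + n - k) mod n))" for j
  have "(\<Sum>j<n. d j) = n * (p * q)"
    unfolding d_def using e k(2) by (intro shifted_exponent_sum) (auto simp: less_imp_le)
  hence "p * q dvd (\<Sum>j<n. d j)" by simp
  note counts = vanishing_sum_pq_structure[OF pq n van[folded d_def] this]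
  have "(j + n - k) mod n < n" for j using k(2) by simp
  hence "e ((j + n - k) mod n) \<le> p * q" for j using e less_imp_le by blast
  hence "r dvd d j \<longleftrightarrow> e j mod r = e ((j + n - k) mod n) mod r" if "r dvd p * q" for r j
    unfolding d_def using that by (intro dvd_add_complement_iff)
  thus "\<forall>j<n. e j mod p = e ((j + n - k) mod n) mod p \<or> e j mod q = e ((j + n - k) mod n) mod q"
    and "\<exists>j<n. e j mod p \<noteq> e ((j + n - k) mod n) mod p"
    and "\<exists>j<n. e j mod q \<noteq> e ((j + n - k) mod n) mod q"
    using counts by simp_all
qed

lemma labelling_constant:
  assumes agree: "\<forall>j\<in>A. \<forall>j'\<in>A. X j = X j' \<or> Y j = Y j'"
    and ab: "a \<in> A" "b \<in> A" "X a \<noteq> X b"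
  shows "\<forall>c\<in>A. Y c = Y a"
  using assms by metis

text \<open>The
  residues modulo \<open>p\<close> and \<open>q\<close> of the first-row exponents would have to satisfy the
  incompatible conditions of \<open>labelling_constant\<close>.\<close>
theorem theorem1p3:
  fixes p q :: nat
  assumes "prime p" "prime q" "p \<ge> 5" "q \<ge> 5" "p \<noteq> q"
  shows "circ_hadamard_roots (p + q) (p * q) = {}"
proof (rule equals0I)
  fix H assume "H \<in> circ_hadamard_roots (p + q) (p * q)"
  define n where "n = p + q"
  hence H: "complex_hadamard n H" "circulant n H" "\<forall>i<n. \<forall>j<n. H i j ^ (p * q) = 1"
    using \<open>H \<in> _\<close> by (auto simp: circ_hadamard_roots_def)
  have pq: "prime p" "prime q" "p \<noteq> q" "odd p" "odd q" using assms prime_odd_nat by auto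
  have m: "p * q > 0" and n1: "1 < n" using assms by (auto simp: n_def)
  have "\<And>j. j < n \<Longrightarrow> H 0 j ^ (p * q) = 1" using H(3) n1 by auto
  then obtain e where e: "\<And>j. j < n \<Longrightarrow> e j < p * q \<and> H 0 j = cis (2 * pi / real (p * q)) ^ e j"
    using first_row_exponents[OF m] by blast
  note shift = circulant_shift_residues[OF pq n_def H(1,2) e]
  have agree: "\<forall>j\<in>{..<n}. \<forall>j'\<in>{..<n}. e j mod p = e j' mod p \<or> e j mod q = e j' mod q"
    by (rule relation_from_all_shifts) (use shift(1) in auto)
  obtain a where a: "a < n" "e a mod p \<noteq> e ((a + n - 1) mod n) mod p" using shift(2)[of 1] n1 by auto
  moreover have "(a + n - 1) mod n < n" using n1 by simp
  ultimately have "\<forall>c\<in>{..<n}. e c mod q = e a mod q" using labelling_constant[OF agree] by blast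
  moreover obtain b where "b < n" "e b mod q \<noteq> e ((b + n - 1) mod n) mod q"
    using shift(3)[of 1] n1 by auto
  ultimately show False using n1 by simp
qed

end
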